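(* As formal power series in $y$, \[ \sum_{n\ge0}H_n(x)y^n=\frac{2+y}{1-xy^2(1+y)}-(1-x)y-1, \] and the $(1,2,3)$-Padovan numbers satisfy \[ \sum_{n\ge0}p'_ny^n=\frac{1+2y+2y^2}{1-y^2-y^3}. \]
   Context: For $n\ge1$ let $\Xi_n$ be the poset on $\{x_1,\dots,x_n\}$ whose cover relations are exactly: $x_2\prec x_1$, $x_3\prec x_2$, and for $3\le i\le n-1$, $x_i\prec x_{i+1}$ if $i$ is odd and $x_{i+1}\prec x_i$ if $i$ is even (so $x_1>x_2>x_3<x_4>x_5<\cdots$). A filter of a poset is an up-closed subset. The matchable Lucas cube $\Omega_n$ is the graph whose vertices are the filters of $\Xi_n$, two filters adjacent iff one is obtained from the other by deleting a single element; $\Omega_0$ is the one-vertex graph. $h_{n,k}$ is the number of maximal induced $k$-dimensional hypercubes in $\Omega_n$ (induced $k$-cubes not contained in an induced $(k+1)$-cube), and $H_n(x)=\sum_{k\ge0}h_{n,k}x^k$ is the maximal cube polynomial. The $(1,2,3)$-Padovan numbers are $p'_0=1$, $p'_1=2$, $p'_2=3$, $p'_n=p'_{n-2}+p'_{n-3}$ for $n\ge3$. *)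

theory Defs
  imports "HOL-Computational_Algebra.Formal_Power_Series"
begin

text \<open>Element x_i of Xi_n is represented by the index i in {1..n}.
  xi_cover n i j means x_i is covered by x_j (x_i \<prec> x_j).\<close>
definition xi_cover :: "nat \<Rightarrow> nat \<Rightarrow> nat \<Rightarrow> bool" where
  "xi_cover n i j \<longleftrightarrow> i \<le> n \<and> j \<le> n \<and>
     ((i = 2 \<and> j = 1) \<or> (i = 3 \<and> j = 2) \<or>
      (3 \<le> i \<and> i \<le> n - 1 \<and> odd i \<and> j = i + 1) \<or>
      (3 \<le> j \<and> j \<le> n - 1 \<and> even j \<and> i = j + 1))"

definition xi_le :: "nat \<Rightarrow> nat \<Rightarrow> nat \<Rightarrow> bool" where
  "xi_le n = (xi_cover n)\<^sup>*\<^sup>*"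

definition xi_filter :: "nat \<Rightarrow> nat set \<Rightarrow> bool" where
  "xi_filter n F \<longleftrightarrow> F \<subseteq> {1..n} \<and>
     (\<forall>a\<in>F. \<forall>b\<in>{1..n}. xi_le n a b \<longrightarrow> b \<in> F)"

definition omega_verts :: "nat \<Rightarrow> nat set set" where
  "omega_verts n = {F. xi_filter n F}"

definition omega_adj :: "nat set \<Rightarrow> nat set \<Rightarrow> bool" where
  "omega_adj F G \<longleftrightarrow> (\<exists>a\<in>F. G = F - {a}) \<or> (\<exists>a\<in>G. F = G - {a})"

definition induced_cube :: "'v set \<Rightarrow> ('v \<Rightarrow> 'v \<Rightarrow> bool) \<Rightarrow> nat \<Rightarrow> 'v set \<Rightarrow> bool" where
  "induced_cube V adj k S \<longleftrightarrow> S \<subseteq> V \<and>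
     (\<exists>f. bij_betw f (Pow {..<k}) S \<and>
        (\<forall>A\<in>Pow {..<k}. \<forall>B\<in>Pow {..<k}.
            adj (f A) (f B) \<longleftrightarrow> card ((A - B) \<union> (B - A)) = 1))"

definition maximal_cube :: "'v set \<Rightarrow> ('v \<Rightarrow> 'v \<Rightarrow> bool) \<Rightarrow> nat \<Rightarrow> 'v set \<Rightarrow> bool" where
  "maximal_cube V adj k S \<longleftrightarrow> induced_cube V adj k S \<and>
     \<not> (\<exists>S'. induced_cube V adj (Suc k) S' \<and> S \<subseteq> S')"

definition h :: "nat \<Rightarrow> nat \<Rightarrow> nat" where
  "h n k = card {S. maximal_cube (omega_verts n) omega_adj k S}"

definition H :: "nat \<Rightarrow> real \<Rightarrow> real" where
  "H n x = (\<Sum>k\<in>{k. h n k \<noteq> 0}. real (h n k) * x ^ k)"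

fun padovan :: "nat \<Rightarrow> nat" where
  "padovan 0 = 1"
| "padovan (Suc 0) = 2"
| "padovan (Suc (Suc 0)) = 3"
| "padovan (Suc (Suc (Suc n))) = padovan (Suc n) + padovan n"

end

theory Submission
  imports Defs
begin

text \<open>
  A k-cube of Omega_n is a family of filters G \<union> B, B \<subseteq> E, with G \<inter> E = {} and card E = k.
  In a lattice of up-sets such a cube is maximal exactly when E consists of all elements that
  can be added to G and no element of G can be released, so a maximal cube is determined by
  its least filter G, its bottom, and H_n(x) is the sum of x ^ card E(G) over all bottoms G.
  The bottoms of Xi_n have a local description; splitting them according to whether they
  contain the largest even element t \<le> n gives H_(n+3) = x (H_(n+1) + H_n) for n \<ge> 2, and
  the generating function follows from H_0, ..., H_4. The (1,2,3)-Padovan numbers satisfy the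
  same recurrence with x = 1.
\<close>

section \<open>Cubes in the graph of sets differing in one element\<close>

lemma omega_adj_iff_card_sym_diff: "omega_adj F G \<longleftrightarrow> card (sym_diff F G) = 1"
proof -
  have "omega_adj F G \<longleftrightarrow> (\<exists>a. sym_diff F G = {a})"
  proof
    assume "omega_adj F G"
    then obtain a where "(a \<in> F \<and> G = F - {a}) \<or> (a \<in> G \<and> F = G - {a})"
      unfolding omega_adj_def by blast
    then have "sym_diff F G = {a}" by (elim disjE) auto
    then show "\<exists>a. sym_diff F G = {a}" ..
  next
    assume "\<exists>a. sym_diff F G = {a}"
    then obtain a where a: "sym_diff F G = {a}" ..
    show "omega_adj F G"
    proof (cases "a \<in> F")
      case True
      then have "G = F - {a}" using a by (auto simp: set_eq_iff)
      with True show ?thesis unfolding omega_adj_def by (intro disjI1 bexI[of _ a])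
    next
      case False
      then have "a \<in> G" using a by blast
      moreover have "F = G - {a}"
        using a False by (intro set_eqI) (metis DiffE DiffI UnCI singletonD)
      ultimately show ?thesis unfolding omega_adj_def by (intro disjI2 bexI[of _ a])
    qed
  qed
  then show ?thesis by (simp add: card_1_singleton_iff)
qed

lemma sym_diff_image_inj_on:
  assumes "inj_on f K" "A \<subseteq> K" "B \<subseteq> K"
  shows "sym_diff (f ` A) (f ` B) = f ` sym_diff A B"
proof -
  have "A - B \<subseteq> K" "B - A \<subseteq> K" using assms(2,3) by auto
  then have "f ` (A - B) = f ` A - f ` B" "f ` (B - A) = f ` B - f ` A"
    using inj_on_image_set_diff[OF assms(1)] assms(2,3) by simp_all
  then show ?thesis by (simp add: image_Un)
qed

definition set_cube :: "'a set \<Rightarrow> 'a set \<Rightarrow> 'a set set" where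
  "set_cube G E = (\<lambda>B. G \<union> B) ` Pow E"

lemma set_cube_memI: "B \<subseteq> E \<Longrightarrow> G \<union> B \<in> set_cube G E"
  unfolding set_cube_def by blast

lemma bij_betw_set_cube: "G \<inter> E = {} \<Longrightarrow> bij_betw (\<lambda>B. G \<union> B) (Pow E) (set_cube G E)"
  unfolding set_cube_def bij_betw_def inj_on_def by auto

lemma induced_cube_set_cube:
  assumes "G \<inter> E = {}" "finite E" "card E = k" "set_cube G E \<subseteq> V"
  shows "induced_cube V omega_adj k (set_cube G E)"
proof -
  obtain b where b: "bij_betw b {..<k} E"
    using ex_bij_betw_nat_finite[OF assms(2)] assms(3) by (auto simp: lessThan_atLeast0)
  then have inj: "inj_on b {..<k}" and img: "b ` {..<k} = E"
    by (auto simp: bij_betw_def)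
  define f where "f = (\<lambda>A. G \<union> b ` A)"
  have "bij_betw f (Pow {..<k}) (set_cube G E)"
    using bij_betw_trans[OF bij_betw_image_Pow[OF b] bij_betw_set_cube[OF assms(1)]]
    by (simp add: f_def comp_def)
  moreover have "omega_adj (f A) (f B) \<longleftrightarrow> card (sym_diff A B) = 1"
    if "A \<subseteq> {..<k}" "B \<subseteq> {..<k}" for A B
  proof -
    have "b ` A \<subseteq> E" "b ` B \<subseteq> E" using that img by auto
    then have "sym_diff (f A) (f B) = sym_diff (b ` A) (b ` B)"
      using assms(1) unfolding f_def by auto
    also have "\<dots> = b ` sym_diff A B" by (rule sym_diff_image_inj_on[OF inj that])
    finally have "card (sym_diff (f A) (f B)) = card (sym_diff A B)"
      using that by (metis card_image inj_on_subset[OF inj] Un_least Diff_subset order_trans)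
    then show ?thesis by (simp add: omega_adj_iff_card_sym_diff)
  qed
  ultimately show ?thesis
    unfolding induced_cube_def using assms(4) by auto
qed

lemma cube_embedding_sym_diff_step:
  assumes inj: "inj_on f (Pow I)"
    and adj: "\<And>A B. A \<subseteq> I \<Longrightarrow> B \<subseteq> I \<Longrightarrow> card (sym_diff A B) = 1 \<Longrightarrow>
               card (sym_diff (f A) (f B)) = 1"
    and inj_e: "inj_on e I" and "A \<subseteq> I" and ij: "i \<in> A" "j \<in> A" "i \<noteq> j"
    and smaller: "\<And>B. B \<subset> A \<Longrightarrow> f B = sym_diff F0 (e ` B)"
  shows "f A = sym_diff F0 (e ` A)"
proof -
  have IH: "f (A - {i}) = sym_diff F0 (e ` A - {e i})" "f (A - {j}) = sym_diff F0 (e ` A - {e j})"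
    "f (A - {i, j}) = sym_diff F0 (e ` A - {e i, e j})"
    using smaller[of "A - {i}"] smaller[of "A - {j}"] smaller[of "A - {i, j}"]
      inj_on_subset[OF inj_e \<open>A \<subseteq> I\<close>] ij
    by (auto simp: inj_on_image_set_diff)
  have eij: "e i \<noteq> e j" using inj_e \<open>A \<subseteq> I\<close> ij by (auto dest: inj_onD)
  obtain a where a: "sym_diff (f A) (f (A - {i})) = {a}"
    using adj[of A "A - {i}"] \<open>A \<subseteq> I\<close> ij by (auto simp: card_1_singleton_iff Diff_Diff_Int)
  obtain c where c: "sym_diff (f A) (f (A - {j})) = {c}"
    using adj[of A "A - {j}"] \<open>A \<subseteq> I\<close> ij by (auto simp: card_1_singleton_iff Diff_Diff_Int)
  have fA: "f A = sym_diff (f (A - {i})) {a}" using a by blast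
  have "sym_diff {a} {c} = sym_diff (f (A - {i})) (f (A - {j}))"
    using a c by blast
  also have "\<dots> = {e i, e j}" using IH ij eij by auto
  finally have "a = e i \<or> a = e j" by blast
  then show ?thesis
  proof
    assume "a = e j"
    then have "f A = f (A - {i, j})" unfolding fA IH using ij eij by auto
    then have "A = A - {i, j}" using inj \<open>A \<subseteq> I\<close> by (auto dest: inj_onD)
    then show ?thesis using ij by auto
  qed (use fA IH ij in auto)
qed

lemma cube_embedding_sym_diff:
  assumes "finite I" and inj: "inj_on f (Pow I)"
    and adj: "\<And>A B. A \<subseteq> I \<Longrightarrow> B \<subseteq> I \<Longrightarrow> card (sym_diff A B) = 1 \<Longrightarrow>
               card (sym_diff (f A) (f B)) = 1"
  obtains e where "inj_on e I" "\<And>A. A \<subseteq> I \<Longrightarrow> f A = sym_diff (f {}) (e ` A)"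
proof -
  define F0 where "F0 = f {}"
  have "\<exists>a. sym_diff F0 (f {i}) = {a}" if "i \<in> I" for i
    using adj[of "{}" "{i}"] that unfolding F0_def by (simp add: card_1_singleton_iff)
  then obtain e where e: "\<And>i. i \<in> I \<Longrightarrow> sym_diff F0 (f {i}) = {e i}" by metis
  then have f_single: "f {i} = sym_diff F0 {e i}" if "i \<in> I" for i
    using e[OF that] by blast
  have inj_e: "inj_on e I"
  proof (rule inj_onI)
    fix i j assume "i \<in> I" "j \<in> I" "e i = e j"
    then have "f {i} = f {j}" using f_single by simp
    with \<open>i \<in> I\<close> \<open>j \<in> I\<close> have "{i} = {j}" using inj by (auto dest: inj_onD)
    then show "i = j" by simp
  qed
  have "f A = sym_diff F0 (e ` A)" if "A \<subseteq> I" for A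
    using that
  proof (induction "card A" arbitrary: A rule: less_induct)
    case less
    have "finite A" using less.prems \<open>finite I\<close> finite_subset by blast
    show ?case
    proof (cases "card A \<le> 1")
      case True
      then have "A = {} \<or> (\<exists>i. A = {i})" using \<open>finite A\<close>
        by (auto simp: le_Suc_eq card_1_singleton_iff)
      then show ?thesis using f_single less.prems unfolding F0_def by auto
    next
      case False
      then obtain i j where ij: "i \<in> A" "j \<in> A" "i \<noteq> j"
        using \<open>finite A\<close> by (auto simp: card_le_Suc0_iff_eq)
      have smaller: "f B = sym_diff F0 (e ` B)" if "B \<subset> A" for B
        using less.hyps[OF psubset_card_mono[OF \<open>finite A\<close> that]] that less.prems by blast
      show ?thesis by (rule cube_embedding_sym_diff_step[OF inj adj inj_e less.prems ij smaller])
    qed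
  qed
  with inj_e show ?thesis using that unfolding F0_def by blast
qed

lemma image_sym_diff_Pow: "(\<lambda>C. sym_diff F C) ` Pow E = set_cube (F - E) E"
unfolding set_cube_def
proof (intro equalityI subsetI; elim imageE)
  fix S C assume "S = sym_diff F C" "C \<in> Pow E"
  then show "S \<in> (\<lambda>B. (F - E) \<union> B) ` Pow E"
    by (intro image_eqI[of _ _ "sym_diff (F \<inter> E) C"]) blast+
next
  fix S B assume "S = (F - E) \<union> B" "B \<in> Pow E"
  then show "S \<in> (\<lambda>C. sym_diff F C) ` Pow E"
    by (intro image_eqI[of _ _ "sym_diff (F \<inter> E) B"]) blast+
qed

lemma induced_cube_iff:
  "induced_cube V omega_adj k S \<longleftrightarrow>
   (\<exists>G E. S = set_cube G E \<and> G \<inter> E = {} \<and> finite E \<and> card E = k \<and> set_cube G E \<subseteq> V)"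
  (is "_ \<longleftrightarrow> ?R")
proof
  assume "induced_cube V omega_adj k S"
  then obtain f where "S \<subseteq> V" and bij: "bij_betw f (Pow {..<k}) S"
    and adj: "\<And>A B. A \<subseteq> {..<k} \<Longrightarrow> B \<subseteq> {..<k} \<Longrightarrow>
                omega_adj (f A) (f B) \<longleftrightarrow> card (sym_diff A B) = 1"
    unfolding induced_cube_def by blast
  have inj: "inj_on f (Pow {..<k})" and img: "f ` Pow {..<k} = S"
    using bij by (auto simp: bij_betw_def)
  have adj': "card (sym_diff (f A) (f B)) = 1"
    if "A \<subseteq> {..<k}" "B \<subseteq> {..<k}" "card (sym_diff A B) = 1" for A B
    using adj[OF that(1,2)] that(3) by (simp add: omega_adj_iff_card_sym_diff)
  obtain e where inj_e: "inj_on e {..<k}"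
    and f_eq: "\<And>A. A \<subseteq> {..<k} \<Longrightarrow> f A = sym_diff (f {}) (e ` A)"
    using cube_embedding_sym_diff[OF finite_lessThan inj adj'] by blast
  define E where "E = e ` {..<k}"
  have "Pow E = image e ` Pow {..<k}"
    using image_Pow_surj[of e "{..<k}" E] by (simp add: E_def)
  have "S = (\<lambda>A. sym_diff (f {}) (e ` A)) ` Pow {..<k}"
    unfolding img[symmetric] by (rule image_cong[OF refl f_eq]) simp
  also have "\<dots> = (\<lambda>C. sym_diff (f {}) C) ` Pow E"
    unfolding \<open>Pow E = image e ` Pow {..<k}\<close> image_image ..
  also have "\<dots> = set_cube (f {} - E) E" by (rule image_sym_diff_Pow)
  finally have "S = set_cube (f {} - E) E" .
  moreover have "card E = k" unfolding E_def using inj_e by (simp add: card_image)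
  moreover have "finite E" "(f {} - E) \<inter> E = {}" unfolding E_def by auto
  ultimately show ?R using \<open>S \<subseteq> V\<close> by blast
qed (metis induced_cube_set_cube)

lemma set_cube_subset_set_cube:
  assumes "G \<inter> E = {}" "G' \<inter> E' = {}" "set_cube G E \<subseteq> set_cube G' E'"
  shows "G' \<subseteq> G" "E \<subseteq> E'" "G \<subseteq> G' \<union> E'"
proof -
  have "G \<union> {} \<in> set_cube G' E'" "G \<union> E \<in> set_cube G' E'"
    using assms(3) set_cube_memI[of "{}" E G] set_cube_memI[of E E G] by blast+
  then obtain B0 B1 where "B0 \<subseteq> E'" "G = G' \<union> B0" "B1 \<subseteq> E'" "G \<union> E = G' \<union> B1"
    unfolding set_cube_def by auto
  then show "G' \<subseteq> G" "E \<subseteq> E'" "G \<subseteq> G' \<union> E'" using assms(1,2) by blast+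
qed

lemma set_cube_extension:
  assumes "G \<inter> E = {}" "G' \<inter> E' = {}" "finite E'" "card E' = Suc (card E)"
    and "set_cube G E \<subseteq> set_cube G' E'"
  obtains b where "b \<notin> E" "E' = insert b E" "G' = G - {b}"
proof -
  note sub = set_cube_subset_set_cube[OF assms(1,2,5)]
  have "card (E' - E) = 1"
    using sub assms(3,4) by (simp add: card_Diff_subset finite_subset)
  then obtain b where "E' - E = {b}" by (auto simp: card_1_singleton_iff)
  then have "b \<notin> E" "E' = insert b E" using sub by auto
  moreover have "G' = G - {b}" using sub assms(1,2) calculation by blast
  ultimately show ?thesis using that by blast
qed

lemma set_cube_subset_insert: "set_cube G E \<subseteq> set_cube (G - {b}) (insert b E)"
  unfolding set_cube_def
proof (intro subsetI, elim imageE)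
  fix S B assume "S = G \<union> B" "B \<in> Pow E"
  then show "S \<in> (\<lambda>B. (G - {b}) \<union> B) ` Pow (insert b E)"
    by (intro image_eqI[of _ _ "B \<union> (G \<inter> {b})"]) auto
qed

lemma maximal_cube_iff:
  "maximal_cube V omega_adj k S \<longleftrightarrow>
   (\<exists>G E. S = set_cube G E \<and> G \<inter> E = {} \<and> finite E \<and> card E = k \<and> set_cube G E \<subseteq> V \<and>
      (\<forall>b. b \<notin> E \<longrightarrow> \<not> set_cube (G - {b}) (insert b E) \<subseteq> V))"
  (is "_ \<longleftrightarrow> ?R")
proof
  assume max: "maximal_cube V omega_adj k S"
  then obtain G E where GE: "S = set_cube G E" "G \<inter> E = {}" "finite E" "card E = k"
    "set_cube G E \<subseteq> V"
    unfolding maximal_cube_def induced_cube_iff by blast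
  have "\<not> set_cube (G - {b}) (insert b E) \<subseteq> V" if "b \<notin> E" for b
  proof
    assume "set_cube (G - {b}) (insert b E) \<subseteq> V"
    then have "induced_cube V omega_adj (Suc k) (set_cube (G - {b}) (insert b E))"
      using GE that by (intro induced_cube_set_cube) auto
    moreover have "S \<subseteq> set_cube (G - {b}) (insert b E)"
      unfolding GE(1) by (rule set_cube_subset_insert)
    ultimately show False using max unfolding maximal_cube_def by blast
  qed
  with GE show ?R by blast
next
  assume ?R
  then obtain G E where GE: "S = set_cube G E" "G \<inter> E = {}" "finite E" "card E = k"
    "set_cube G E \<subseteq> V"
    and no_ext: "\<And>b. b \<notin> E \<Longrightarrow> \<not> set_cube (G - {b}) (insert b E) \<subseteq> V"
    by blast
  have "\<not> induced_cube V omega_adj (Suc k) S'" if "S \<subseteq> S'" for S'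
  proof
    assume "induced_cube V omega_adj (Suc k) S'"
    then obtain G' E' where "S' = set_cube G' E'" "G' \<inter> E' = {}" "finite E'" "card E' = Suc k"
      "set_cube G' E' \<subseteq> V"
      unfolding induced_cube_iff by blast
    with GE that obtain b where "b \<notin> E" "E' = insert b E" "G' = G - {b}"
      using set_cube_extension[of G E G' E'] by blast
    with no_ext \<open>set_cube G' E' \<subseteq> V\<close> show False by blast
  qed
  with GE show "maximal_cube V omega_adj k S"
    unfolding maximal_cube_def induced_cube_iff by blast
qed

section \<open>Maximal cubes in a lattice of up-sets\<close>

definition up_closed :: "('a \<Rightarrow> 'a \<Rightarrow> bool) \<Rightarrow> 'a set \<Rightarrow> bool" where
  "up_closed c F \<longleftrightarrow> (\<forall>i j. c i j \<longrightarrow> i \<in> F \<longrightarrow> j \<in> F)"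

abbreviation up_sets :: "'a set \<Rightarrow> ('a \<Rightarrow> 'a \<Rightarrow> bool) \<Rightarrow> 'a set set" where
  "up_sets U c \<equiv> {F. F \<subseteq> U \<and> up_closed c F}"

definition addable :: "'a set \<Rightarrow> ('a \<Rightarrow> 'a \<Rightarrow> bool) \<Rightarrow> 'a set \<Rightarrow> 'a set" where
  "addable U c G = {b \<in> U - G. \<forall>j. c b j \<longrightarrow> j \<in> G}"

definition maximal_cube_bottom :: "'a set \<Rightarrow> ('a \<Rightarrow> 'a \<Rightarrow> bool) \<Rightarrow> 'a set \<Rightarrow> bool" where
  "maximal_cube_bottom U c G \<longleftrightarrow>
     G \<subseteq> U \<and> up_closed c G \<and> (\<forall>b\<in>G. \<exists>i\<in>G \<union> addable U c G. c i b)"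

lemma set_cube_subset_up_sets_iff:
  assumes irr: "irreflp c" and disj: "G \<inter> E = {}"
  shows "set_cube G E \<subseteq> up_sets U c \<longleftrightarrow>
         G \<union> E \<subseteq> U \<and> up_closed c G \<and> (\<forall>i\<in>E. \<forall>j. c i j \<longrightarrow> j \<in> G)"
    (is "_ \<longleftrightarrow> ?R")
proof
  assume cube: "set_cube G E \<subseteq> up_sets U c"
  have "G \<union> E \<subseteq> U" "up_closed c G"
    using cube set_cube_memI[of E E G] set_cube_memI[of "{}" E G] by auto
  moreover have "j \<in> G" if "i \<in> E" "c i j" for i j
  proof -
    have "up_closed c (G \<union> {i})" using cube set_cube_memI[of "{i}" E G] that by auto
    then have "j \<in> G \<union> {i}" using that unfolding up_closed_def by blast
    then show ?thesis using irreflpD[OF irr] that by auto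
  qed
  ultimately show ?R by blast
next
  assume ?R
  then show "set_cube G E \<subseteq> up_sets U c"
    unfolding set_cube_def up_closed_def by blast
qed

lemma up_sets_cube_extend_iff:
  assumes irr: "irreflp c" and disj: "G \<inter> E = {}" and cube: "set_cube G E \<subseteq> up_sets U c"
    and "b \<notin> G" "b \<notin> E"
  shows "set_cube (G - {b}) (insert b E) \<subseteq> up_sets U c \<longleftrightarrow> b \<in> addable U c G"
proof -
  have GE: "G \<union> E \<subseteq> U" "up_closed c G" "\<And>i j. i \<in> E \<Longrightarrow> c i j \<Longrightarrow> j \<in> G"
    using cube unfolding set_cube_subset_up_sets_iff[OF irr disj] by blast+
  have "G - {b} = G" using \<open>b \<notin> G\<close> by blast
  then show ?thesis
    using set_cube_subset_up_sets_iff[OF irr, where G=G and E="insert b E"] assms(4,5) GE disj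
    unfolding addable_def by auto
qed

lemma up_sets_cube_release_iff:
  assumes irr: "irreflp c" and disj: "G \<inter> E = {}" and cube: "set_cube G E \<subseteq> up_sets U c"
    and "b \<in> G"
  shows "set_cube (G - {b}) (insert b E) \<subseteq> up_sets U c \<longleftrightarrow> \<not> (\<exists>i\<in>G \<union> E. c i b)"
proof -
  have GE: "G \<union> E \<subseteq> U" "up_closed c G" "\<And>i j. i \<in> E \<Longrightarrow> c i j \<Longrightarrow> j \<in> G"
    using cube unfolding set_cube_subset_up_sets_iff[OF irr disj] by blast+
  have "(G - {b}) \<inter> insert b E = {}" using disj by blast
  moreover have "up_closed c (G - {b}) \<longleftrightarrow> \<not> (\<exists>i\<in>G. c i b)"
    using GE(2) irreflpD[OF irr] \<open>b \<in> G\<close> unfolding up_closed_def by blast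
  moreover have "j \<in> G" if "c b j" for j
    using GE(2) \<open>b \<in> G\<close> that unfolding up_closed_def by blast
  ultimately show ?thesis
    using set_cube_subset_up_sets_iff[OF irr] GE irreflpD[OF irr] \<open>b \<in> G\<close> by auto
qed

lemma up_sets_cube_maximal_iff:
  assumes irr: "irreflp c" and disj: "G \<inter> E = {}" and cube: "set_cube G E \<subseteq> up_sets U c"
  shows "(\<forall>b. b \<notin> E \<longrightarrow> \<not> set_cube (G - {b}) (insert b E) \<subseteq> up_sets U c) \<longleftrightarrow>
         E = addable U c G \<and> (\<forall>b\<in>G. \<exists>i\<in>G \<union> E. c i b)"
proof -
  note extend = up_sets_cube_extend_iff[OF irr disj cube]
    and release = up_sets_cube_release_iff[OF irr disj cube]
  show ?thesis
  proof (intro iffI conjI)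
    assume no_ext: "\<forall>b. b \<notin> E \<longrightarrow> \<not> set_cube (G - {b}) (insert b E) \<subseteq> up_sets U c"
    have "E \<subseteq> addable U c G"
      using cube disj unfolding set_cube_subset_up_sets_iff[OF irr disj] addable_def by blast
    moreover have "addable U c G \<subseteq> E"
    proof
      fix b assume "b \<in> addable U c G"
      moreover have "b \<notin> G" using \<open>b \<in> addable U c G\<close> unfolding addable_def by blast
      ultimately show "b \<in> E" using no_ext extend by blast
    qed
    ultimately show "E = addable U c G" by blast
    show "\<forall>b\<in>G. \<exists>i\<in>G \<union> E. c i b"
      using no_ext release disj by blast
  next
    assume "E = addable U c G \<and> (\<forall>b\<in>G. \<exists>i\<in>G \<union> E. c i b)"
    then show "\<forall>b. b \<notin> E \<longrightarrow> \<not> set_cube (G - {b}) (insert b E) \<subseteq> up_sets U c"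
      using extend release by blast
  qed
qed

lemma maximal_cube_up_sets_iff:
  assumes irr: "irreflp c" and "finite U"
  shows "maximal_cube (up_sets U c) omega_adj k S \<longleftrightarrow>
         (\<exists>G. maximal_cube_bottom U c G \<and> card (addable U c G) = k \<and>
              S = set_cube G (addable U c G))"
    (is "_ \<longleftrightarrow> ?R")
proof
  assume "maximal_cube (up_sets U c) omega_adj k S"
  then obtain G E where GE: "S = set_cube G E" "G \<inter> E = {}" "card E = k"
    and cube: "set_cube G E \<subseteq> up_sets U c"
    and no_ext: "\<forall>b. b \<notin> E \<longrightarrow> \<not> set_cube (G - {b}) (insert b E) \<subseteq> up_sets U c"
    unfolding maximal_cube_iff by blast
  have "E = addable U c G" "\<forall>b\<in>G. \<exists>i\<in>G \<union> E. c i b"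
    using no_ext unfolding up_sets_cube_maximal_iff[OF irr GE(2) cube] by blast+
  moreover have "G \<subseteq> U" "up_closed c G"
    using cube unfolding set_cube_subset_up_sets_iff[OF irr GE(2)] by blast+
  ultimately show ?R
    using GE unfolding maximal_cube_bottom_def by blast
next
  assume ?R
  then obtain G where bottom: "maximal_cube_bottom U c G" and "card (addable U c G) = k"
    and S: "S = set_cube G (addable U c G)" by blast
  define E where "E = addable U c G"
  have disj: "G \<inter> E = {}" and "finite E"
    unfolding E_def addable_def using \<open>finite U\<close> by auto
  have "G \<subseteq> U" "up_closed c G" using bottom unfolding maximal_cube_bottom_def by blast+
  moreover have "E \<subseteq> U" "\<forall>i\<in>E. \<forall>j. c i j \<longrightarrow> j \<in> G" unfolding E_def addable_def by blast+
  ultimately have cube: "set_cube G E \<subseteq> up_sets U c"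
    by (simp add: set_cube_subset_up_sets_iff[OF irr disj])
  have "E = addable U c G \<and> (\<forall>b\<in>G. \<exists>i\<in>G \<union> E. c i b)"
    using bottom unfolding maximal_cube_bottom_def E_def by blast
  then have "\<forall>b. b \<notin> E \<longrightarrow> \<not> set_cube (G - {b}) (insert b E) \<subseteq> up_sets U c"
    unfolding up_sets_cube_maximal_iff[OF irr disj cube] .
  then show "maximal_cube (up_sets U c) omega_adj k S"
    unfolding maximal_cube_iff using S disj \<open>finite E\<close> \<open>card (addable U c G) = k\<close> cube
    unfolding E_def by blast
qed

lemma card_maximal_cubes_up_sets:
  assumes "irreflp c" "finite U"
  shows "card {S. maximal_cube (up_sets U c) omega_adj k S} =
         card {G. maximal_cube_bottom U c G \<and> card (addable U c G) = k}"
proof -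
  have disj: "G \<inter> addable U c G = {}" for G unfolding addable_def by blast
  have "inj_on (\<lambda>G. set_cube G (addable U c G)) X" for X
  proof (rule inj_onI)
    fix G G' assume eq: "set_cube G (addable U c G) = set_cube G' (addable U c G')"
    have "G' \<subseteq> G" by (rule set_cube_subset_set_cube(1)[OF disj disj]) (simp add: eq)
    moreover have "G \<subseteq> G'" by (rule set_cube_subset_set_cube(1)[OF disj disj]) (simp add: eq)
    ultimately show "G = G'" by (rule subset_antisym[rotated])
  qed
  moreover have "{S. maximal_cube (up_sets U c) omega_adj k S} =
      (\<lambda>G. set_cube G (addable U c G)) ` {G. maximal_cube_bottom U c G \<and> card (addable U c G) = k}"
    unfolding maximal_cube_up_sets_iff[OF assms] image_def by blast
  ultimately show ?thesis by (simp add: card_image)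
qed

lemma xi_cover_iff:
  "xi_cover n i j \<longleftrightarrow> i \<le> n \<and> j \<le> n \<and>
     ((i = 2 \<and> j = 1) \<or> (odd i \<and> 3 \<le> i \<and> (j = i - 1 \<or> j = i + 1)))"
  unfolding xi_cover_def by (intro iffI; elim conjE disjE; simp; presburger)

lemma xi_cover_below_iff:
  "xi_cover n i b \<longleftrightarrow> i \<le> n \<and> b \<le> n \<and>
     ((b = 1 \<and> i = 2) \<or> (b = 2 \<and> i = 3) \<or> (even b \<and> 4 \<le> b \<and> (i = b - 1 \<or> i = b + 1)))"
  unfolding xi_cover_iff by (intro iffI; elim conjE disjE; simp; presburger)

lemma irreflp_xi_cover: "irreflp (xi_cover n)"
  unfolding irreflp_def xi_cover_iff by presburger

lemma omega_verts_eq_up_sets: "omega_verts n = up_sets {1..n} (xi_cover n)"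
proof -
  have "xi_filter n F \<longleftrightarrow> F \<subseteq> {1..n} \<and> up_closed (xi_cover n) F" for F
  proof
    assume "xi_filter n F"
    moreover have "j \<in> {1..n}" "xi_le n i j" if "xi_cover n i j" for i j
      using that by (auto simp: xi_cover_iff xi_le_def)
    ultimately show "F \<subseteq> {1..n} \<and> up_closed (xi_cover n) F"
      unfolding xi_filter_def up_closed_def by blast
  next
    assume F: "F \<subseteq> {1..n} \<and> up_closed (xi_cover n) F"
    have "b \<in> F" if "xi_le n a b" "a \<in> F" for a b
      using that unfolding xi_le_def
    proof (induction rule: rtranclp_induct)
      case (step y z)
      then show ?case using F unfolding up_closed_def by blast
    qed
    then show "xi_filter n F" using F unfolding xi_filter_def by blast
  qed
  then show ?thesis unfolding omega_verts_def by blast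
qed

definition xi_addable :: "nat \<Rightarrow> nat set \<Rightarrow> nat set" where
  "xi_addable n G = addable {1..n} (xi_cover n) G"

lemma mem_xi_addable:
  "b \<in> xi_addable n G \<longleftrightarrow> 1 \<le> b \<and> b \<le> n \<and> b \<notin> G \<and> (b = 2 \<longrightarrow> 1 \<in> G) \<and>
     (odd b \<and> 3 \<le> b \<longrightarrow> b - 1 \<in> G \<and> (b + 1 \<le> n \<longrightarrow> b + 1 \<in> G))"
  unfolding xi_addable_def addable_def xi_cover_iff by auto

lemma xi_lower_cover_iff:
  assumes "G \<subseteq> {1..n}" "\<forall>a\<in>G. \<not> (odd a \<and> 3 \<le> a)" "b \<in> G"
  shows "(\<exists>i\<in>G \<union> xi_addable n G. xi_cover n i b) \<longleftrightarrow>
         (b = 1 \<longrightarrow> 2 \<le> n) \<and> (b = 2 \<longrightarrow> 3 \<le> n \<and> (4 \<le> n \<longrightarrow> 4 \<in> G)) \<and>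
         (even b \<and> 4 \<le> b \<longrightarrow> b - 2 \<in> G \<or> (b + 1 \<le> n \<and> (b + 2 \<le> n \<longrightarrow> b + 2 \<in> G)))"
proof -
  have "b \<le> n" "1 \<le> b" using assms(1,3) by auto
  have "b = 1 \<or> b = 2 \<or> (even b \<and> 4 \<le> b) \<or> (odd b \<and> 3 \<le> b)"
    using \<open>1 \<le> b\<close> by presburger
  then consider "b = 1" | "b = 2" | "even b" "4 \<le> b" | "odd b" "3 \<le> b" by blast
  then show ?thesis
  proof cases
    case 1
    then show ?thesis
      using assms \<open>b \<le> n\<close> mem_xi_addable[of 2 n G] by (auto simp: xi_cover_below_iff)
  next
    case 2
    then show ?thesis
      using assms \<open>b \<le> n\<close> mem_xi_addable[of 3 n G] by (auto simp: xi_cover_below_iff)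
  next
    case 3
    have "odd (b - 1)" "3 \<le> b - 1" "b - 1 - 1 = b - 2" "b - 1 + 1 = b" "b - 1 \<noteq> 2"
      "odd (b + 1)" "b + 1 - 1 = b" "b + 1 + 1 = b + 2"
      using 3 by presburger+
    then show ?thesis
      using assms \<open>b \<le> n\<close> 3 mem_xi_addable[of "b - 1" n G] mem_xi_addable[of "b + 1" n G]
      by (auto simp: xi_cover_below_iff)
  next
    case 4
    then show ?thesis using assms by blast
  qed
qed

text \<open>Minimal elements x_b (b odd, b \<ge> 3) cannot lie in a bottom, and each element of G must
  cover an element of G or an addable one: x_1 covers x_2, x_2 covers x_3 (addable iff x_4 \<in> G),
  and an even x_b with b \<ge> 4 covers x_(b-1) (addable iff x_(b-2) \<in> G) and x_(b+1).\<close>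
definition xi_bottom :: "nat \<Rightarrow> nat set \<Rightarrow> bool" where
  "xi_bottom n G \<longleftrightarrow> G \<subseteq> {1..n} \<and> (\<forall>b\<in>G. b = 1 \<or> b = 2 \<or> (even b \<and> 4 \<le> b)) \<and>
     (2 \<in> G \<longrightarrow> 1 \<in> G) \<and> (1 \<in> G \<longrightarrow> 2 \<le> n) \<and> (2 \<in> G \<longrightarrow> 3 \<le> n \<and> (4 \<le> n \<longrightarrow> 4 \<in> G)) \<and>
     (\<forall>b\<in>G. even b \<and> 4 \<le> b \<longrightarrow> b - 2 \<in> G \<or> (b + 1 \<le> n \<and> (b + 2 \<le> n \<longrightarrow> b + 2 \<in> G)))"

lemma maximal_cube_bottom_xi_iff: "maximal_cube_bottom {1..n} (xi_cover n) G \<longleftrightarrow> xi_bottom n G"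
proof
  assume bottom: "maximal_cube_bottom {1..n} (xi_cover n) G"
  then have sub: "G \<subseteq> {1..n}" and closed: "up_closed (xi_cover n) G"
    and low: "\<And>b. b \<in> G \<Longrightarrow> \<exists>i\<in>G \<union> xi_addable n G. xi_cover n i b"
    unfolding maximal_cube_bottom_def xi_addable_def by blast+
  have no_odd: "\<forall>a\<in>G. \<not> (odd a \<and> 3 \<le> a)"
  proof (intro ballI notI)
    fix a assume "a \<in> G" "odd a \<and> 3 \<le> a"
    with low obtain i where "xi_cover n i a" by blast
    with \<open>odd a \<and> 3 \<le> a\<close> show False by (auto simp: xi_cover_below_iff)
  qed
  have "b = 1 \<or> b = 2 \<or> (even b \<and> 4 \<le> b)" if "b \<in> G" for b
    using sub no_odd that by fastforce
  moreover have "1 \<in> G" if "2 \<in> G"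
  proof -
    have "xi_cover n 2 1" using that sub by (auto simp: xi_cover_iff)
    then show ?thesis using closed that unfolding up_closed_def by blast
  qed
  moreover have conds: "(b = 1 \<longrightarrow> 2 \<le> n) \<and> (b = 2 \<longrightarrow> 3 \<le> n \<and> (4 \<le> n \<longrightarrow> 4 \<in> G)) \<and>
      (even b \<and> 4 \<le> b \<longrightarrow> b - 2 \<in> G \<or> (b + 1 \<le> n \<and> (b + 2 \<le> n \<longrightarrow> b + 2 \<in> G)))"
    if "b \<in> G" for b
    using xi_lower_cover_iff[OF sub no_odd that] low[OF that] by blast
  moreover have "1 \<in> G \<Longrightarrow> 2 \<le> n" "2 \<in> G \<Longrightarrow> 3 \<le> n \<and> (4 \<le> n \<longrightarrow> 4 \<in> G)"
    using conds[of 1] conds[of 2] by simp_all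
  ultimately show "xi_bottom n G" unfolding xi_bottom_def using sub by (intro conjI) blast+
next
  assume "xi_bottom n G"
  then have sub: "G \<subseteq> {1..n}" and shape: "\<And>b. b \<in> G \<Longrightarrow> b = 1 \<or> b = 2 \<or> (even b \<and> 4 \<le> b)"
    and "2 \<in> G \<Longrightarrow> 1 \<in> G"
    unfolding xi_bottom_def by blast+
  have no_odd: "\<forall>a\<in>G. \<not> (odd a \<and> 3 \<le> a)" using shape by fastforce
  have "up_closed (xi_cover n) G"
    unfolding up_closed_def xi_cover_iff using shape \<open>2 \<in> G \<Longrightarrow> 1 \<in> G\<close> by fastforce
  moreover have "\<exists>i\<in>G \<union> xi_addable n G. xi_cover n i b" if "b \<in> G" for b
    using xi_lower_cover_iff[OF sub no_odd that] \<open>xi_bottom n G\<close> that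
    unfolding xi_bottom_def by blast
  ultimately show "maximal_cube_bottom {1..n} (xi_cover n) G"
    unfolding maximal_cube_bottom_def xi_addable_def using sub by blast
qed

lemma h_eq_card_xi_bottoms: "h n k = card {G. xi_bottom n G \<and> card (xi_addable n G) = k}"
  unfolding h_def omega_verts_eq_up_sets
    card_maximal_cubes_up_sets[OF irreflp_xi_cover finite_atLeastAtMost] maximal_cube_bottom_xi_iff
    xi_addable_def ..

section \<open>Recursive structure of the bottoms\<close>

text \<open>In the names below the parity is that of the larger index n, and top refers to the
  largest even t \<le> n. Bottoms for n without t are the bottoms for n - 2 (n even) or n - 3
  (n odd); bottoms with t arise from bottoms for n - 3 by adding {n - 2, n} (n even) or from
  bottoms for n - 2 by adding n - 1 (n odd). Each time exactly one element, n or n - 1,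
  becomes addable.\<close>

lemma xi_bottomD:
  assumes "xi_bottom n G"
  shows "G \<subseteq> {1..n}" "\<And>b. b \<in> G \<Longrightarrow> b = 1 \<or> b = 2 \<or> (even b \<and> 4 \<le> b)"
    "2 \<in> G \<Longrightarrow> 1 \<in> G" "1 \<in> G \<Longrightarrow> 2 \<le> n" "2 \<in> G \<Longrightarrow> 3 \<le> n" "2 \<in> G \<Longrightarrow> 4 \<le> n \<Longrightarrow> 4 \<in> G"
    "\<And>b. b \<in> G \<Longrightarrow> even b \<Longrightarrow> 4 \<le> b \<Longrightarrow> b - 2 \<in> G \<or> (b + 1 \<le> n \<and> (b + 2 \<le> n \<longrightarrow> b + 2 \<in> G))"
  using assms unfolding xi_bottom_def by blast+

lemma xi_bottomI:
  assumes "G \<subseteq> {1..n}" "\<And>b. b \<in> G \<Longrightarrow> b = 1 \<or> b = 2 \<or> (even b \<and> 4 \<le> b)"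
    "2 \<in> G \<Longrightarrow> 1 \<in> G" "1 \<in> G \<Longrightarrow> 2 \<le> n" "2 \<in> G \<Longrightarrow> 3 \<le> n" "2 \<in> G \<Longrightarrow> 4 \<le> n \<Longrightarrow> 4 \<in> G"
    "\<And>b. b \<in> G \<Longrightarrow> even b \<Longrightarrow> 4 \<le> b \<Longrightarrow> b - 2 \<in> G \<or> (b + 1 \<le> n \<and> (b + 2 \<le> n \<longrightarrow> b + 2 \<in> G))"
  shows "xi_bottom n G"
  using assms unfolding xi_bottom_def by blast

lemma xi_bottom_lift_even:
  assumes m: "even m" "4 \<le> m" and V: "xi_bottom m G"
  shows "xi_bottom (m + 2) G"
proof (rule xi_bottomI)
  note D = xi_bottomD[OF V]
  show "G \<subseteq> {1..m + 2}" using D(1) by auto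
  fix b assume b: "b \<in> G" "even b" "4 \<le> b"
  have bm: "b \<le> m" using D(1) b by auto
  from D(7)[OF b] show "b - 2 \<in> G \<or> (b + 1 \<le> m + 2 \<and> (b + 2 \<le> m + 2 \<longrightarrow> b + 2 \<in> G))"
  proof
    assume "b + 1 \<le> m \<and> (b + 2 \<le> m \<longrightarrow> b + 2 \<in> G)"
    moreover have "b + 2 \<le> m" if "b + 1 \<le> m" using that m b by presburger
    ultimately show ?thesis by auto
  qed simp
qed (use xi_bottomD[OF V] m in auto)

lemma xi_bottom_drop_even:
  assumes m: "even m" "4 \<le> m" and V: "xi_bottom (m + 2) G" and nG: "m + 2 \<notin> G"
  shows "xi_bottom m G"
proof -
  note D = xi_bottomD[OF V]
  have sub: "G \<subseteq> {1..m}"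
  proof
    fix b assume b: "b \<in> G"
    have "b \<le> m + 2" "1 \<le> b" using D(1) b by auto
    moreover have "b \<noteq> m + 2" using nG b by auto
    moreover have "b \<noteq> m + 1" using D(2)[OF b] m by presburger
    ultimately show "b \<in> {1..m}" by auto
  qed
  show ?thesis
  proof (rule xi_bottomI)
    show "G \<subseteq> {1..m}" by (rule sub)
    fix b assume b: "b \<in> G" "even b" "4 \<le> b"
    have bm: "b \<le> m" using sub b by auto
    from D(7)[OF b] show "b - 2 \<in> G \<or> (b + 1 \<le> m \<and> (b + 2 \<le> m \<longrightarrow> b + 2 \<in> G))"
    proof
      assume "b + 1 \<le> m + 2 \<and> (b + 2 \<le> m + 2 \<longrightarrow> b + 2 \<in> G)"
      then have "b + 2 \<in> G" using bm by auto
      then have "b + 2 \<le> m" using sub by auto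
      then show ?thesis using \<open>b + 2 \<in> G\<close> by auto
    qed simp
  qed (use D m in auto)
qed

lemma xi_addable_lift_even:
  assumes m: "even m" "4 \<le> m" and V: "xi_bottom m G"
  shows "xi_addable (m + 2) G = insert (m + 2) (xi_addable m G)"
proof (rule set_eqI)
  fix x
  note D = xi_bottomD[OF V]
  have "m + 1 \<notin> G" "m + 2 \<notin> G" using D(1) by auto
  consider "x = m + 2" | "x = m + 1" | "x = m" | "x + 1 \<le> m" | "m + 2 < x" by linarith
  then show "x \<in> xi_addable (m + 2) G \<longleftrightarrow> x \<in> insert (m + 2) (xi_addable m G)"
  proof cases
    case 1 then show ?thesis using m \<open>m + 2 \<notin> G\<close> by (simp add: mem_xi_addable)
  next
    case 2 then show ?thesis using m \<open>m + 2 \<notin> G\<close> by (simp add: mem_xi_addable)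
  next
    case 3 then show ?thesis using m by (simp add: mem_xi_addable)
  next
    case 4 then show ?thesis by (auto simp: mem_xi_addable)
  qed (auto simp: mem_xi_addable)
qed

lemma xi_bottom_lift_even_top:
  assumes m: "odd m" "3 \<le> m" and V: "xi_bottom m G"
  shows "xi_bottom (m + 3) (G \<union> {m + 1, m + 3})"
proof -
  note D = xi_bottomD[OF V]
  have par: "even (m + 1)" "even (m + 3)" "4 \<le> m + 1" using m by presburger+
  show ?thesis
  proof (rule xi_bottomI)
    show "G \<union> {m + 1, m + 3} \<subseteq> {1..m + 3}" using D(1) by auto
    fix b assume b: "b \<in> G \<union> {m + 1, m + 3}" "even b" "4 \<le> b"
    show "b - 2 \<in> G \<union> {m + 1, m + 3} \<or>
        (b + 1 \<le> m + 3 \<and> (b + 2 \<le> m + 3 \<longrightarrow> b + 2 \<in> G \<union> {m + 1, m + 3}))"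
    proof (cases "b \<in> G")
      case True
      have "b \<le> m" using D(1) True b(2) m by auto
      then have bm: "b + 1 \<le> m" using b(2) m by presburger
      from D(7)[OF True b(2,3)] show ?thesis
      proof
        assume "b + 1 \<le> m \<and> (b + 2 \<le> m \<longrightarrow> b + 2 \<in> G)"
        moreover have "b + 2 \<le> m \<or> b + 2 = m + 1" using bm by auto
        ultimately show ?thesis by auto
      qed simp
    next
      case False
      then have "b = m + 1 \<or> b = m + 3" using b by auto
      then show ?thesis by auto
    qed
  next
    fix b assume "b \<in> G \<union> {m + 1, m + 3}"
    then show "b = 1 \<or> b = 2 \<or> (even b \<and> 4 \<le> b)" using D(2) par by auto
  next
    assume "2 \<in> G \<union> {m + 1, m + 3}" "4 \<le> m + 3"
    then have "2 \<in> G" using m by auto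
    then show "4 \<in> G \<union> {m + 1, m + 3}" using D(6) m by (cases "m = 3") auto
  qed (use D m in auto)
qed

lemma xi_bottom_drop_even_top:
  assumes m: "odd m" "3 \<le> m" and V: "xi_bottom (m + 3) G" and top: "m + 3 \<in> G"
  shows "m + 1 \<in> G" "xi_bottom m (G - {m + 1, m + 3})"
proof -
  note D = xi_bottomD[OF V]
  have par: "even (m + 1)" "even (m + 3)" "4 \<le> m + 3" "odd (m + 2)" using m by presburger+
  show m1: "m + 1 \<in> G" using D(7)[OF top par(2,3)] by simp
  have sub: "G - {m + 1, m + 3} \<subseteq> {1..m}"
  proof
    fix b assume b: "b \<in> G - {m + 1, m + 3}"
    have "b \<le> m + 3" "1 \<le> b" using D(1) b by auto
    moreover have "b \<noteq> m + 2" using D(2)[of b] b par m by auto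
    ultimately show "b \<in> {1..m}" using b by auto
  qed
  show "xi_bottom m (G - {m + 1, m + 3})"
  proof (rule xi_bottomI)
    show "G - {m + 1, m + 3} \<subseteq> {1..m}" by (rule sub)
    fix b assume b: "b \<in> G - {m + 1, m + 3}" "even b" "4 \<le> b"
    have "b \<le> m" using sub b m by auto
    then have bm: "b + 1 \<le> m" using b(2) m by presburger
    from D(7)[of b] b show "b - 2 \<in> G - {m + 1, m + 3} \<or>
        (b + 1 \<le> m \<and> (b + 2 \<le> m \<longrightarrow> b + 2 \<in> G - {m + 1, m + 3}))"
      using bm by auto
  next
    assume "2 \<in> G - {m + 1, m + 3}" "4 \<le> m"
    then show "4 \<in> G - {m + 1, m + 3}" using D(6) by auto
  qed (use D m in auto)
qed

lemma xi_addable_lift_even_top: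
  assumes m: "odd m" "3 \<le> m" and V: "xi_bottom m G"
  shows "xi_addable (m + 3) (G \<union> {m + 1, m + 3}) = insert (m + 2) (xi_addable m G)"
proof (rule set_eqI)
  fix x
  note D = xi_bottomD[OF V]
  have nG: "m + 1 \<notin> G" "m + 2 \<notin> G" "m + 3 \<notin> G" "m \<notin> G" using D(1) D(2)[of m] m by auto
  have par: "odd (m + 2)" "m + 2 \<noteq> 2" "m + 2 - 1 = m + 1" "m + 2 + 1 = m + 3" "m - 1 + 1 = m"
    using m by presburger+
  consider "x = m + 3" | "x = m + 2" | "x = m + 1" | "x = m" | "x + 1 \<le> m" | "m + 3 < x" by linarith
  then show "x \<in> xi_addable (m + 3) (G \<union> {m + 1, m + 3}) \<longleftrightarrow> x \<in> insert (m + 2) (xi_addable m G)"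
  proof cases
    case 2 then show ?thesis using par nG by (simp add: mem_xi_addable)
  next
    case 4 then show ?thesis using par nG m by (auto simp: mem_xi_addable)
  next
    case 5 then show ?thesis using m by (auto simp: mem_xi_addable)
  qed (auto simp: mem_xi_addable)
qed

lemma xi_bottom_lift_odd:
  assumes m: "even m" "2 \<le> m" and V: "xi_bottom m G"
  shows "xi_bottom (m + 3) G" "m + 2 \<notin> G"
proof -
  note D = xi_bottomD[OF V]
  show "m + 2 \<notin> G" using D(1) by auto
  show "xi_bottom (m + 3) G"
  proof (rule xi_bottomI)
    show "G \<subseteq> {1..m + 3}" using D(1) by auto
    fix b assume b: "b \<in> G" "even b" "4 \<le> b"
    from D(7)[OF b] show "b - 2 \<in> G \<or> (b + 1 \<le> m + 3 \<and> (b + 2 \<le> m + 3 \<longrightarrow> b + 2 \<in> G))"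
    proof
      assume a: "b + 1 \<le> m \<and> (b + 2 \<le> m \<longrightarrow> b + 2 \<in> G)"
      then have "b + 1 \<le> m" by simp
      then have "b + 2 \<le> m" using m b(2) by presburger
      then show ?thesis using a by auto
    qed simp
  next
    assume "2 \<in> G" "4 \<le> m + 3"
    then have "3 \<le> m" using D(5) by auto
    then have "4 \<le> m" using m by presburger
    then show "4 \<in> G" using D(6) \<open>2 \<in> G\<close> by auto
  qed (use D m in auto)
qed

lemma xi_bottom_drop_odd:
  assumes m: "even m" "2 \<le> m" and V: "xi_bottom (m + 3) G" and nG: "m + 2 \<notin> G"
  shows "xi_bottom m G"
proof -
  note D = xi_bottomD[OF V]
  have sub: "G \<subseteq> {1..m}"
  proof
    fix b assume b: "b \<in> G"
    have "b \<le> m + 3" "1 \<le> b" using D(1) b by auto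
    moreover have "b \<noteq> m + 2" using nG b by auto
    moreover have "b \<noteq> m + 1" "b \<noteq> m + 3" using D(2)[OF b] m by presburger+
    ultimately show "b \<in> {1..m}" by auto
  qed
  show ?thesis
  proof (rule xi_bottomI)
    show "G \<subseteq> {1..m}" by (rule sub)
    fix b assume b: "b \<in> G" "even b" "4 \<le> b"
    have bm: "b \<le> m" using sub b by auto
    from D(7)[OF b] show "b - 2 \<in> G \<or> (b + 1 \<le> m \<and> (b + 2 \<le> m \<longrightarrow> b + 2 \<in> G))"
    proof
      assume "b + 1 \<le> m + 3 \<and> (b + 2 \<le> m + 3 \<longrightarrow> b + 2 \<in> G)"
      then have "b + 2 \<in> G" using bm by auto
      then have "b + 2 \<le> m" using sub by auto
      then show ?thesis using \<open>b + 2 \<in> G\<close> by auto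
    qed simp
  next
    assume "2 \<in> G"
    moreover have "4 \<le> m + 3" using m by simp
    ultimately have "4 \<in> G" using D(6) by blast
    then show "3 \<le> m" using sub by auto
  next
    assume "2 \<in> G" "4 \<le> m"
    then show "4 \<in> G" using D(6) by auto
  qed (use D m in auto)
qed

lemma xi_addable_lift_odd:
  assumes m: "even m" "2 \<le> m" and V: "xi_bottom m G"
  shows "xi_addable (m + 3) G = insert (m + 2) (xi_addable m G)"
proof (rule set_eqI)
  fix x
  note D = xi_bottomD[OF V]
  have nG: "m + 1 \<notin> G" "m + 2 \<notin> G" "m + 3 \<notin> G" using D(1) by auto
  have par: "odd (m + 3)" "odd (m + 1)" "even (m + 2)" "m + 3 - 1 = m + 2" "m + 1 + 1 = m + 2"
    using m by presburger+
  consider "x = m + 3" | "x = m + 2" | "x = m + 1" | "x = m" | "x + 1 \<le> m" | "m + 3 < x" by linarith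
  then show "x \<in> xi_addable (m + 3) G \<longleftrightarrow> x \<in> insert (m + 2) (xi_addable m G)"
  proof cases
    case 1 then show ?thesis using par nG by (simp add: mem_xi_addable)
  next
    case 2 then show ?thesis using par nG m by (simp add: mem_xi_addable)
  next
    case 3 then show ?thesis using par nG m by (simp add: mem_xi_addable)
  next
    case 4 then show ?thesis using par nG m by (auto simp: mem_xi_addable)
  next
    case 5 then show ?thesis using m by (auto simp: mem_xi_addable)
  qed (auto simp: mem_xi_addable)
qed

lemma xi_bottom_lift_odd_top:
  assumes m: "odd m" "3 \<le> m" and V: "xi_bottom m G"
  shows "xi_bottom (m + 2) (insert (m + 1) G)"
proof -
  note D = xi_bottomD[OF V]
  have par: "even (m + 1)" "4 \<le> m + 1" using m by presburger+
  show ?thesis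
  proof (rule xi_bottomI)
    show "insert (m + 1) G \<subseteq> {1..m + 2}" using D(1) by auto
    fix b assume b: "b \<in> insert (m + 1) G" "even b" "4 \<le> b"
    show "b - 2 \<in> insert (m + 1) G \<or> (b + 1 \<le> m + 2 \<and> (b + 2 \<le> m + 2 \<longrightarrow> b + 2 \<in> insert (m + 1) G))"
    proof (cases "b \<in> G")
      case True
      have "b \<le> m" using D(1) True b(2) m by auto
      then have bm: "b + 1 \<le> m" using b(2) m by presburger
      from D(7)[OF True b(2,3)] show ?thesis
      proof
        assume "b + 1 \<le> m \<and> (b + 2 \<le> m \<longrightarrow> b + 2 \<in> G)"
        moreover have "b + 2 \<le> m \<or> b + 2 = m + 1" using bm by auto
        ultimately show ?thesis by auto
      qed simp
    next
      case False
      then have "b = m + 1" using b by auto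
      then show ?thesis by auto
    qed
  next
    fix b assume "b \<in> insert (m + 1) G"
    then show "b = 1 \<or> b = 2 \<or> (even b \<and> 4 \<le> b)" using D(2) par by auto
  next
    assume "2 \<in> insert (m + 1) G" "4 \<le> m + 2"
    then have "2 \<in> G" using m by auto
    then show "4 \<in> insert (m + 1) G" using D(6) m by (cases "m = 3") auto
  qed (use D m in auto)
qed

lemma xi_bottom_drop_odd_top:
  assumes m: "odd m" "3 \<le> m" and V: "xi_bottom (m + 2) G" and top: "m + 1 \<in> G"
  shows "xi_bottom m (G - {m + 1})"
proof -
  note D = xi_bottomD[OF V]
  have par: "odd (m + 2)" using m by presburger
  have sub: "G - {m + 1} \<subseteq> {1..m}"
  proof
    fix b assume b: "b \<in> G - {m + 1}"
    have "b \<le> m + 2" "1 \<le> b" using D(1) b by auto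
    moreover have "b \<noteq> m + 2" using D(2)[of b] b par m by auto
    ultimately show "b \<in> {1..m}" using b by auto
  qed
  show ?thesis
  proof (rule xi_bottomI)
    show "G - {m + 1} \<subseteq> {1..m}" by (rule sub)
    fix b assume b: "b \<in> G - {m + 1}" "even b" "4 \<le> b"
    have "b \<le> m" using sub b m by auto
    then have bm: "b + 1 \<le> m" using b(2) m by presburger
    from D(7)[of b] b show "b - 2 \<in> G - {m + 1} \<or> (b + 1 \<le> m \<and> (b + 2 \<le> m \<longrightarrow> b + 2 \<in> G - {m + 1}))"
      using bm by auto
  next
    assume "2 \<in> G - {m + 1}" "4 \<le> m"
    then show "4 \<in> G - {m + 1}" using D(6) by auto
  qed (use D m in auto)
qed

lemma xi_addable_lift_odd_top:
  assumes m: "odd m" "3 \<le> m" and V: "xi_bottom m G"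
  shows "xi_addable (m + 2) (insert (m + 1) G) = insert (m + 2) (xi_addable m G)"
proof (rule set_eqI)
  fix x
  note D = xi_bottomD[OF V]
  have nG: "m + 1 \<notin> G" "m + 2 \<notin> G" "m \<notin> G" using D(1) D(2)[of m] m by auto
  have par: "odd (m + 2)" "m + 2 \<noteq> 2" "m + 2 - 1 = m + 1" "m - 1 + 1 = m"
    using m by presburger+
  consider "x = m + 2" | "x = m + 1" | "x = m" | "x + 1 \<le> m" | "m + 2 < x" by linarith
  then show "x \<in> xi_addable (m + 2) (insert (m + 1) G) \<longleftrightarrow> x \<in> insert (m + 2) (xi_addable m G)"
  proof cases
    case 1 then show ?thesis using par nG by (simp add: mem_xi_addable)
  next
    case 3 then show ?thesis using par nG m by (auto simp: mem_xi_addable)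
  next
    case 4 then show ?thesis using m by (auto simp: mem_xi_addable)
  qed (auto simp: mem_xi_addable)
qed

lemma xi_bottoms_even_without_top:
  assumes "odd m" "3 \<le> m"
  shows "{G. xi_bottom (m + 3) G} - {G. m + 3 \<in> G} = {G. xi_bottom (m + 1) G}"
proof -
  have m1: "even (m + 1)" "4 \<le> m + 1" using assms by presburger+
  have e: "m + 1 + 2 = m + 3" by simp
  have "xi_bottom (m + 3) G \<and> m + 3 \<notin> G \<longleftrightarrow> xi_bottom (m + 1) G" for G
  proof
    assume "xi_bottom (m + 3) G \<and> m + 3 \<notin> G"
    then show "xi_bottom (m + 1) G" using xi_bottom_drop_even[OF m1, of G, unfolded e] by blast
  next
    assume G: "xi_bottom (m + 1) G"
    then show "xi_bottom (m + 3) G \<and> m + 3 \<notin> G"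
      using xi_bottom_lift_even[OF m1 G, unfolded e] xi_bottomD(1)[OF G] by auto
  qed
  then show ?thesis by auto
qed

lemma xi_bottoms_even_with_top:
  assumes m: "odd m" "3 \<le> m"
  shows "{G. xi_bottom (m + 3) G} \<inter> {G. m + 3 \<in> G} =
         (\<lambda>G. G \<union> {m + 1, m + 3}) ` {G. xi_bottom m G}"
proof (intro equalityI subsetI)
  fix G assume "G \<in> {G. xi_bottom (m + 3) G} \<inter> {G. m + 3 \<in> G}"
  then have G: "xi_bottom (m + 3) G" "m + 3 \<in> G" by auto
  have "G = (G - {m + 1, m + 3}) \<union> {m + 1, m + 3}"
    using xi_bottom_drop_even_top(1)[OF m G] G(2) by auto
  moreover have "xi_bottom m (G - {m + 1, m + 3})" by (rule xi_bottom_drop_even_top(2)[OF m G])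
  ultimately show "G \<in> (\<lambda>G. G \<union> {m + 1, m + 3}) ` {G. xi_bottom m G}" by blast
next
  fix G assume "G \<in> (\<lambda>G. G \<union> {m + 1, m + 3}) ` {G. xi_bottom m G}"
  then obtain G0 where "xi_bottom m G0" "G = G0 \<union> {m + 1, m + 3}" by auto
  then show "G \<in> {G. xi_bottom (m + 3) G} \<inter> {G. m + 3 \<in> G}"
    using xi_bottom_lift_even_top[OF m] by auto
qed

lemma xi_bottoms_odd_without_top:
  assumes "even m" "2 \<le> m"
  shows "{G. xi_bottom (m + 3) G} - {G. m + 2 \<in> G} = {G. xi_bottom m G}"
proof -
  have "xi_bottom (m + 3) G \<and> m + 2 \<notin> G \<longleftrightarrow> xi_bottom m G" for G
    using xi_bottom_lift_odd[OF assms, of G] xi_bottom_drop_odd[OF assms, of G] by auto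
  then show ?thesis by auto
qed

lemma xi_bottoms_odd_with_top:
  assumes "even m" "2 \<le> m"
  shows "{G. xi_bottom (m + 3) G} \<inter> {G. m + 2 \<in> G} = insert (m + 2) ` {G. xi_bottom (m + 1) G}"
proof (intro equalityI subsetI)
  have m1: "odd (m + 1)" "3 \<le> m + 1" using assms by presburger+
  have e: "m + 1 + 2 = m + 3" "m + 1 + 1 = m + 2" by simp_all
  {
    fix G assume "G \<in> {G. xi_bottom (m + 3) G} \<inter> {G. m + 2 \<in> G}"
    then have G: "xi_bottom (m + 1 + 2) G" "m + 1 + 1 \<in> G" unfolding e by auto
    have "G = insert (m + 2) (G - {m + 2})" using G(2) by auto
    moreover have "xi_bottom (m + 1) (G - {m + 2})"
      using xi_bottom_drop_odd_top[OF m1 G] unfolding e .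
    ultimately show "G \<in> insert (m + 2) ` {G. xi_bottom (m + 1) G}" by blast
  next
    fix G assume "G \<in> insert (m + 2) ` {G. xi_bottom (m + 1) G}"
    then obtain G0 where "xi_bottom (m + 1) G0" "G = insert (m + 2) G0" by auto
    then show "G \<in> {G. xi_bottom (m + 3) G} \<inter> {G. m + 2 \<in> G}"
      using xi_bottom_lift_odd_top[OF m1, of G0, unfolded e] by auto
  }
qed

definition xi_weight :: "nat \<Rightarrow> real \<Rightarrow> real" where
  "xi_weight n x = (\<Sum>G | xi_bottom n G. x ^ card (xi_addable n G))"

lemma finite_xi_bottoms: "finite {G. xi_bottom n G}"
  by (rule finite_subset[of _ "Pow {1..n}"]) (auto simp: xi_bottom_def)

lemma xi_addable_notin: "n < a \<Longrightarrow> a \<notin> xi_addable n G"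
  by (simp add: mem_xi_addable)

lemma finite_xi_addable: "finite (xi_addable n G)"
  by (rule finite_subset[of _ "{1..n}"]) (auto simp: mem_xi_addable)

lemma sum_power_by_fibres:
  fixes x :: "'b::comm_semiring_1"
  assumes "finite S"
  shows "(\<Sum>s\<in>S. x ^ g s) =
         (\<Sum>k | card {s \<in> S. g s = k} \<noteq> 0. of_nat (card {s \<in> S. g s = k}) * x ^ k)"
proof -
  have "{k. card {s \<in> S. g s = k} \<noteq> 0} = g ` S"
    using assms by (auto simp: card_eq_0_iff)
  moreover have "(\<Sum>s\<in>{s \<in> S. g s = k}. x ^ g s) = of_nat (card {s \<in> S. g s = k}) * x ^ k" for k
    by simp
  ultimately show ?thesis
    using sum.image_gen[OF assms, of "\<lambda>s. x ^ g s" g] by simp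
qed

lemma H_eq_xi_weight: "H n x = xi_weight n x"
  using sum_power_by_fibres[OF finite_xi_bottoms, of x "\<lambda>G. card (xi_addable n G)" n]
  unfolding H_def h_eq_card_xi_bottoms xi_weight_def by simp

lemma inj_on_Un_disjoint: "inj_on (\<lambda>G. G \<union> T) {G. G \<inter> T = {}}"
  by (rule inj_onI) blast

lemma inj_on_insert_notin: "inj_on (insert a) {G. a \<notin> G}"
  by (rule inj_onI) (simp add: insert_ident)

lemma sum_power_card_insert:
  fixes x :: "'b::comm_semiring_1"
  assumes "\<And>G. G \<in> A \<Longrightarrow> f' G = insert a (f G)"
    and "\<And>G. G \<in> A \<Longrightarrow> a \<notin> f G" "\<And>G. G \<in> A \<Longrightarrow> finite (f G)"
  shows "(\<Sum>G\<in>A. x ^ card (f' G)) = x * (\<Sum>G\<in>A. x ^ card (f G))"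
proof -
  have "(\<Sum>G\<in>A. x ^ card (f' G)) = (\<Sum>G\<in>A. x * x ^ card (f G))"
    using assms by (intro sum.cong) simp_all
  then show ?thesis by (simp add: sum_distrib_left)
qed

lemma xi_weight_even_step:
  assumes m: "odd m" "3 \<le> m"
  shows "xi_weight (m + 3) x = x * (xi_weight (m + 1) x + xi_weight m x)"
proof -
  have m1: "even (m + 1)" "4 \<le> m + 1" and e: "m + 1 + 2 = m + 3" using m by presburger+
  let ?B = "{G. xi_bottom (m + 3) G}" and ?w = "\<lambda>G. x ^ card (xi_addable (m + 3) G)"
  have without_top: "sum ?w (?B - {G. m + 3 \<in> G}) = x * xi_weight (m + 1) x"
    unfolding xi_bottoms_even_without_top[OF m] xi_weight_def
    using xi_addable_lift_even[OF m1, unfolded e]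
    by (intro sum_power_card_insert[where a = "m + 3"])
      (auto simp: xi_addable_notin finite_xi_addable)
  have "inj_on (\<lambda>G. G \<union> {m + 1, m + 3}) {G. xi_bottom m G}"
    by (rule inj_on_subset[OF inj_on_Un_disjoint]) (use xi_bottomD(1) in fastforce)
  then have "sum ?w (?B \<inter> {G. m + 3 \<in> G}) = (\<Sum>G | xi_bottom m G. ?w (G \<union> {m + 1, m + 3}))"
    unfolding xi_bottoms_even_with_top[OF m] by (simp add: sum.reindex)
  also have "\<dots> = x * xi_weight m x"
    unfolding xi_weight_def using xi_addable_lift_even_top[OF m]
    by (intro sum_power_card_insert[where a = "m + 2"])
      (auto simp: xi_addable_notin finite_xi_addable)
  finally have with_top: "sum ?w (?B \<inter> {G. m + 3 \<in> G}) = x * xi_weight m x" .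
  have "xi_weight (m + 3) x = sum ?w (?B \<inter> {G. m + 3 \<in> G}) + sum ?w (?B - {G. m + 3 \<in> G})"
    unfolding xi_weight_def by (rule sum.Int_Diff[OF finite_xi_bottoms])
  then show ?thesis unfolding with_top without_top by (simp add: algebra_simps)
qed

lemma xi_weight_odd_step:
  assumes m: "even m" "2 \<le> m"
  shows "xi_weight (m + 3) x = x * (xi_weight (m + 1) x + xi_weight m x)"
proof -
  have m1: "odd (m + 1)" "3 \<le> m + 1" and e: "m + 1 + 2 = m + 3" "m + 1 + 1 = m + 2"
    using m by presburger+
  let ?B = "{G. xi_bottom (m + 3) G}" and ?w = "\<lambda>G. x ^ card (xi_addable (m + 3) G)"
  have without_top: "sum ?w (?B - {G. m + 2 \<in> G}) = x * xi_weight m x"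
    unfolding xi_bottoms_odd_without_top[OF m] xi_weight_def
    using xi_addable_lift_odd[OF m]
    by (intro sum_power_card_insert[where a = "m + 2"])
      (auto simp: xi_addable_notin finite_xi_addable)
  have "inj_on (insert (m + 2)) {G. xi_bottom (m + 1) G}"
    by (rule inj_on_subset[OF inj_on_insert_notin]) (use xi_bottomD(1) in fastforce)
  then have "sum ?w (?B \<inter> {G. m + 2 \<in> G}) = (\<Sum>G | xi_bottom (m + 1) G. ?w (insert (m + 2) G))"
    unfolding xi_bottoms_odd_with_top[OF m] by (simp add: sum.reindex)
  also have "\<dots> = x * xi_weight (m + 1) x"
    unfolding xi_weight_def using xi_addable_lift_odd_top[OF m1, unfolded e]
    by (intro sum_power_card_insert[where a = "m + 3"])
      (auto simp: xi_addable_notin finite_xi_addable)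
  finally have with_top: "sum ?w (?B \<inter> {G. m + 2 \<in> G}) = x * xi_weight (m + 1) x" .
  have "xi_weight (m + 3) x = sum ?w (?B \<inter> {G. m + 2 \<in> G}) + sum ?w (?B - {G. m + 2 \<in> G})"
    unfolding xi_weight_def by (rule sum.Int_Diff[OF finite_xi_bottoms])
  then show ?thesis unfolding with_top without_top by (simp add: algebra_simps)
qed

lemma xi_weight_rec:
  assumes "2 \<le> n"
  shows "xi_weight (n + 3) x = x * (xi_weight (n + 1) x + xi_weight n x)"
proof (cases "even n")
  case True
  then show ?thesis using xi_weight_odd_step[OF True assms] by simp
next
  case False
  then have "3 \<le> n" using assms by presburger
  with False show ?thesis using xi_weight_even_step by simp
qed

lemma xi_bottom_subset_1_2_4:
  assumes V: "xi_bottom n G" and n: "n \<le> 4"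
  shows "G \<subseteq> {1, 2, 4}"
proof
  fix b assume b: "b \<in> G"
  have "1 \<le> b" "b \<le> 4" using xi_bottomD(1)[OF V] b n by auto
  then show "b \<in> {1, 2, 4}" using xi_bottomD(2)[OF V b] by auto
qed

lemma subset_1_2_4_cases: "G \<subseteq> {1, 2, 4::nat} \<Longrightarrow>
   G = (if 1 \<in> G then {1} else {}) \<union> (if 2 \<in> G then {2} else {}) \<union> (if 4 \<in> G then {4} else {})"
  by auto

lemma xi_bottoms_0: "{G. xi_bottom 0 G} = {{}}"
  by (auto simp: xi_bottom_def)

lemma xi_bottoms_1: "{G. xi_bottom 1 G} = {{}}"
proof (rule set_eqI iffI)+
  fix G assume "G \<in> {G. xi_bottom 1 G}"
  then have V: "xi_bottom 1 G" by simp
  have "G \<subseteq> {1}" using xi_bottomD(1)[OF V] by auto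
  moreover have "1 \<notin> G" using xi_bottomD(4)[OF V] by auto
  ultimately show "G \<in> {{}}" by auto
qed (auto simp: xi_bottom_def)

lemma xi_bottoms_2: "{G. xi_bottom 2 G} = {{}, {1}}"
proof (rule set_eqI iffI)+
  fix G assume "G \<in> {G. xi_bottom 2 G}"
  then have V: "xi_bottom 2 G" by simp
  have "G \<subseteq> {1, 2}" using xi_bottomD(1)[OF V] by auto
  moreover have "2 \<notin> G" using xi_bottomD(5)[OF V] by auto
  ultimately have "G \<subseteq> {1}" by auto
  then show "G \<in> {{}, {1}}" by (auto simp: subset_singleton_iff)
qed (auto simp: xi_bottom_def)

lemma xi_bottoms_3: "{G. xi_bottom 3 G} = {{}, {1}, {1, 2}}"
proof (rule set_eqI iffI)+
  fix G assume "G \<in> {G. xi_bottom 3 G}"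
  then have V: "xi_bottom 3 G" by simp
  have sub: "G \<subseteq> {1, 2, 4}" using xi_bottom_subset_1_2_4[OF V] by simp
  have "4 \<notin> G" using xi_bottomD(1)[OF V] by auto
  moreover have "2 \<in> G \<Longrightarrow> 1 \<in> G" using xi_bottomD(3)[OF V] .
  ultimately show "G \<in> {{}, {1}, {1, 2}}" using subset_1_2_4_cases[OF sub]
    by (cases "1 \<in> G"; cases "2 \<in> G") auto
qed (auto simp: xi_bottom_def)

lemma xi_bottoms_4: "{G. xi_bottom 4 G} = {{}, {1}, {1, 2, 4}}"
proof (rule set_eqI iffI)+
  fix G assume "G \<in> {G. xi_bottom 4 G}"
  then have V: "xi_bottom 4 G" by simp
  have sub: "G \<subseteq> {1, 2, 4}" using xi_bottom_subset_1_2_4[OF V] by simp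
  have a: "2 \<in> G \<Longrightarrow> 1 \<in> G" using xi_bottomD(3)[OF V] .
  have b: "2 \<in> G \<Longrightarrow> 4 \<in> G" using xi_bottomD(6)[OF V] by simp
  have c: "4 \<in> G \<Longrightarrow> 2 \<in> G" using xi_bottomD(7)[OF V, of 4] by simp
  show "G \<in> {{}, {1}, {1, 2, 4}}" using subset_1_2_4_cases[OF sub] a b c
    by (cases "1 \<in> G"; cases "2 \<in> G"; cases "4 \<in> G") auto
qed (auto simp: xi_bottom_def)

lemma xi_weight_0: "xi_weight 0 x = 1"
proof -
  have "xi_addable 0 {} = {}" by (auto simp: mem_xi_addable)
  then show ?thesis unfolding xi_weight_def xi_bottoms_0 by simp
qed

lemma xi_weight_1: "xi_weight 1 x = x"
proof -
  have "xi_addable 1 {} = {1}" by (auto simp: mem_xi_addable)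
  then show ?thesis unfolding xi_weight_def xi_bottoms_1 by simp
qed

lemma xi_weight_2: "xi_weight 2 x = 2 * x"
proof -
  have "xi_addable 2 {} = {1}" "xi_addable 2 {1} = {2}"
    by (auto simp: mem_xi_addable; presburger)+
  then show ?thesis unfolding xi_weight_def xi_bottoms_2 by simp
qed

lemma xi_weight_3: "xi_weight 3 x = 3 * x"
proof -
  have "xi_addable 3 {} = {1}" "xi_addable 3 {1} = {2}" "xi_addable 3 {1, 2} = {3}"
    by (auto simp: mem_xi_addable; presburger)+
  moreover have "{1::nat} \<noteq> {1, 2}" by auto
  ultimately show ?thesis unfolding xi_weight_def xi_bottoms_3 by simp
qed

lemma xi_weight_4: "xi_weight 4 x = 2 * x ^ 2 + x"
proof -
  have "xi_addable 4 {} = {1, 4}" "xi_addable 4 {1} = {2, 4}" "xi_addable 4 {1, 2, 4} = {3}"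
    by (auto simp: mem_xi_addable; presburger)+
  moreover have "{1::nat} \<noteq> {1, 2, 4}" by auto
  ultimately show ?thesis unfolding xi_weight_def xi_bottoms_4 by (simp add: power2_eq_square)
qed

section \<open>Generating functions\<close>

unbundle fps_syntax

lemma fps_X2_X3_recurrence:
  fixes a :: "nat \<Rightarrow> 'a::field"
  assumes rec: "\<And>n. a (n + 3) = c * (a (n + 1) + a n)"
  shows "Abs_fps a =
    (fps_const (a 0) + fps_const (a 1) * fps_X + fps_const (a 2 - c * a 0) * fps_X ^ 2) /
    (1 - fps_const c * fps_X ^ 2 * (1 + fps_X))"
    (is "_ = ?N / ?D")
proof -
  have "Abs_fps a * ?D = ?N"
  proof (rule fps_ext)
    fix n
    have "Abs_fps a * ?D =
        Abs_fps a - fps_const c * (fps_X ^ 2 * Abs_fps a) - fps_const c * (fps_X ^ 3 * Abs_fps a)"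
      by (simp add: algebra_simps numeral_3_eq_3 numeral_2_eq_2)
    then have coeff: "(Abs_fps a * ?D) $ n =
        a n - (if n < 2 then 0 else c * a (n - 2)) - (if n < 3 then 0 else c * a (n - 3))"
      by (simp add: fps_X_power_mult_nth)
    have "n = 0 \<or> n = 1 \<or> n = 2 \<or> (\<exists>k. n = k + 3)" by presburger
    then consider "n = 0" | "n = 1" | "n = 2" | k where "n = k + 3" by blast
    then show "(Abs_fps a * ?D) $ n = ?N $ n"
      using coeff by cases (simp_all add: rec algebra_simps)
  qed
  moreover have "?D \<noteq> 0"
  proof
    assume "?D = 0"
    then have "?D $ 0 = 0" by simp
    then show False by simp
  qed
  ultimately show ?thesis
    using nonzero_mult_div_cancel_right[of ?D "Abs_fps a"] by simp
qed

lemma H_generating_function: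
  "Abs_fps (\<lambda>n. H n x) =
     (2 + fps_X) / (1 - fps_const x * fps_X ^ 2 * (1 + fps_X)) - fps_const (1 - x) * fps_X - 1"
proof -
  \<comment> \<open>Correcting the first two coefficients makes the recurrence hold from n = 0 on.\<close>
  define a where "a n = xi_weight n x + (if n = 0 then 1 else if n = 1 then 1 - x else 0)" for n
  have rec: "a (n + 3) = x * (a (n + 1) + a n)" for n
  proof (cases "2 \<le> n")
    case True
    then show ?thesis using xi_weight_rec[OF True] by (simp add: a_def)
  next
    case False
    have "a 3 = x * (a 1 + a 0)" "a 4 = x * (a 2 + a 1)"
      using xi_weight_0 xi_weight_1 xi_weight_2 xi_weight_3 xi_weight_4
      by (simp_all add: a_def algebra_simps power2_eq_square)
    moreover have "n = 0 \<or> n = 1" using False by linarith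
    ultimately show ?thesis by (auto simp: eval_nat_numeral)
  qed
  have "Abs_fps (\<lambda>n. H n x) = Abs_fps a - fps_const (1 - x) * fps_X - 1"
    by (rule fps_ext) (simp add: a_def H_eq_xi_weight)
  also have "Abs_fps a = (2 + fps_X) / (1 - fps_const x * fps_X ^ 2 * (1 + fps_X))"
    using fps_X2_X3_recurrence[of a x, OF rec] xi_weight_0 xi_weight_1 xi_weight_2
    by (simp add: a_def numeral_fps_const)
  finally show ?thesis .
qed

lemma padovan_generating_function:
  "Abs_fps (\<lambda>n. real (padovan n)) =
     (1 + 2 * fps_X + 2 * fps_X ^ 2) / (1 - fps_X ^ 2 - fps_X ^ 3 :: real fps)"
proof -
  have "real (padovan (n + 3)) = 1 * (real (padovan (n + 1)) + real (padovan n))" for n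
    by (simp add: numeral_3_eq_3)
  from fps_X2_X3_recurrence[of "\<lambda>n. real (padovan n)", OF this]
  show ?thesis by (simp add: numeral_fps_const algebra_simps numeral_2_eq_2 numeral_3_eq_3)
qed

theorem mainTheorem14:
  shows "(\<forall>x::real. Abs_fps (\<lambda>n. H n x) =
            (2 + fps_X) / (1 - fps_const x * fps_X ^ 2 * (1 + fps_X))
              - fps_const (1 - x) * fps_X - 1)
       \<and> Abs_fps (\<lambda>n. real (padovan n)) =
            (1 + 2 * fps_X + 2 * fps_X ^ 2) / (1 - fps_X ^ 2 - fps_X ^ 3 :: real fps)"
  using H_generating_function padovan_generating_function by blast

end
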